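(* For every $n\ge1$, the number of permutations $\pi$ of $\{1,\dots,n\}$ whose Schröder insertion tableau $P(\pi)$ consists of a single row is $2^{\lfloor n/2\rfloor}$.
   Context: A Schröder tableau consists of rows $1,2,\dots$; row $r$ has $\lambda_r$ cells at positions $1,\dots,\lambda_r$, each filled with a number. Cells at odd positions are upper triangles, cells at even positions are lower triangles. The Schröder insertion tableau $P(\pi)$ of $\pi=\pi_1\cdots\pi_n$ is built as follows. Start with $P$ having one row containing $\pi_1$. For $k=2,\dots,n$, insert $\alpha=\pi_k$ into row $i=1$ by the rule: if row $i$ is empty or $\alpha$ is larger than all its entries, place $\alpha$ in a new cell at the end of row $i$ and stop. Otherwise let $j$ be the position in row $i$ of the smallest entry larger than $\alpha$. If $j$ is even: remove the entry $\beta$ at position $j$, write $\alpha$ there, and insert $\beta$ into row $i+1$ by the same rule. If $j$ is odd and position $j+1$ exists in row $i$ with entry $\beta$: move the entry of position $j$ to position $j+1$, write $\alpha$ at position $j$, and insert $\beta$ into row $i+1$. If $j$ is odd and is the last position of row $i$: move the entry of position $j$ into a new cell at position $j+1$ at the end of row $i$, write $\alpha$ at position $j$, and stop. The final $P$ is $P(\pi)$. *)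

theory Defs
  imports Main
begin

text \<open>Row positions are 1-based in the paper; list index k corresponds to position k+1.
  Thus position j is odd iff the list index j-1 is even.\<close>

fun sch_insert :: "nat \<Rightarrow> nat list list \<Rightarrow> nat list list" where
  "sch_insert a [] = [[a]]"
| "sch_insert a (r # rs) =
     (if \<forall>x\<in>set r. x < a then (r @ [a]) # rs
      else
        (let m = Min {x \<in> set r. a < x};
             k = (LEAST k. k < length r \<and> r ! k = m)
         in if odd k then
              \<comment> \<open>position k+1 is even\<close>
              (r[k := a]) # sch_insert (r ! k) rs
            else if Suc k < length r then
              \<comment> \<open>position k+1 odd, position k+2 exists\<close>
              (r[k := a, Suc k := r ! k]) # sch_insert (r ! Suc k) rs
            else
              \<comment> \<open>position k+1 odd and last\<close>
              (r[k := a] @ [r ! k]) # rs))"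

definition sch_P :: "nat list \<Rightarrow> nat list list" where
  "sch_P pi = foldl (\<lambda>T a. sch_insert a T) [[hd pi]] (tl pi)"

end

theory Submission
  imports Defs
begin

text \<open>Once a tableau has a second row it keeps it, and a one-row tableau is the increasing
  arrangement of the letters read so far. Inserting \<open>a\<close> into such a row \<open>r\<close> leaves a single
  row exactly when \<open>a\<close> exceeds all entries, or when only the last entry exceeds \<open>a\<close> and sits at
  an odd position (\<open>|r|\<close> odd): then it is shifted one cell to the right. So a one-row
  permutation of a set \<open>S\<close> ends in \<open>max S\<close>, or, when \<open>|S|\<close> is even, in the second largest
  element of \<open>S\<close>, preceded by a one-row permutation of the remaining letters. The count
  \<open>f\<close> therefore satisfies \<open>f 1 = 1\<close> and \<open>f m = f (m - 1) * (if even m then 2 else 1)\<close>.\<close>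

lemma length_sch_insert_ge: "length T \<le> length (sch_insert a T)"
  by (induction a T rule: sch_insert.induct) (auto simp: Let_def)

lemma length_foldl_sch_insert_ge:
  "length T \<le> length (foldl (\<lambda>T a. sch_insert a T) T xs)"
  by (induction xs arbitrary: T) (auto intro: le_trans length_sch_insert_ge)

lemma sch_P_nonempty: "sch_P xs \<noteq> []"
  using length_foldl_sch_insert_ge[of "[[hd xs]]" "tl xs"] by (auto simp: sch_P_def)

lemma sch_P_snoc: "xs \<noteq> [] \<Longrightarrow> sch_P (xs @ [a]) = sch_insert a (sch_P xs)"
  unfolding sch_P_def by (cases xs) auto

lemma sch_P_single_row_prefix:
  assumes "xs \<noteq> []" "length (sch_P (xs @ [a])) = 1"
  shows "length (sch_P xs) = 1"
  using assms sch_P_nonempty[of xs] length_sch_insert_ge[of "sch_P xs" a]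
  by (auto simp: sch_P_snoc le_Suc_eq)

lemma sorted_row_split:
  fixes r :: "'a::linorder list"
  assumes "sorted_wrt (<) r" "a \<notin> set r"
  shows "\<exists>xs zs. r = xs @ zs \<and> (\<forall>x\<in>set xs. x < a) \<and> (\<forall>z\<in>set zs. a < z)"
  using assms
proof (induction r)
  case (Cons x r)
  then obtain xs zs where "r = xs @ zs" "\<forall>x\<in>set xs. x < a" "\<forall>z\<in>set zs. a < z" by auto
  show ?case
  proof (cases "x < a")
    case True
    with \<open>r = xs @ zs\<close> show ?thesis
      by (intro exI[of _ "x # xs"] exI[of _ zs]) (auto simp: \<open>\<forall>x\<in>set xs. x < a\<close> \<open>\<forall>z\<in>set zs. a < z\<close>)
  next
    case False
    with Cons.prems have "a < x" by auto
    with Cons.prems show ?thesis by (intro exI[of _ "[]"] exI[of _ "x # r"]) auto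
  qed
qed simp

lemma sch_insert_into_sorted_row:
  assumes sorted: "sorted_wrt (<) (xs @ y # ys)"
    and below: "\<forall>x\<in>set xs. x < a" and "a < y"
  shows "sch_insert a ((xs @ y # ys) # rs) =
    (if odd (length xs) then (xs @ a # ys) # sch_insert y rs
     else case ys of
       [] \<Rightarrow> (xs @ [a, y]) # rs
     | z # zs \<Rightarrow> (xs @ a # y # zs) # sch_insert z rs)"
proof -
  define r where "r = xs @ y # ys"
  have ys_above: "\<forall>z\<in>set ys. y < z" using sorted by (simp add: sorted_wrt_append)
  have "{x \<in> set r. a < x} = insert y (set ys)"
    using below \<open>a < y\<close> ys_above by (auto simp: r_def)
  then have min: "Min {x \<in> set r. a < x} = y"
    using ys_above by (auto intro!: Min_eqI simp: less_imp_le)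
  have "distinct r" using sorted by (simp add: r_def strict_sorted_iff)
  have least: "(LEAST k. k < length r \<and> r ! k = y) = length xs"
  proof (rule Least_equality)
    show "length xs < length r \<and> r ! length xs = y" by (simp add: r_def)
    fix k assume "k < length r \<and> r ! k = y"
    with \<open>distinct r\<close> \<open>length xs < length r \<and> r ! length xs = y\<close> show "length xs \<le> k"
      using nth_eq_iff_index_eq by fastforce
  qed
  have not_appended: "\<not> (\<forall>x\<in>set r. x < a)" using \<open>a < y\<close> by (auto simp: r_def)
  have "sch_insert a (r # rs) =
    (if odd (length xs) then r[length xs := a] # sch_insert y rs
     else if Suc (length xs) < length r
       then r[length xs := a, Suc (length xs) := y] # sch_insert (r ! Suc (length xs)) rs
     else (r[length xs := a] @ [y]) # rs)"
    unfolding sch_insert.simps(2) if_not_P[OF not_appended] Let_def min least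
    by (simp add: r_def nth_append)
  also have "\<dots> = (if odd (length xs) then (xs @ a # ys) # sch_insert y rs
     else case ys of
       [] \<Rightarrow> (xs @ [a, y]) # rs
     | z # zs \<Rightarrow> (xs @ a # y # zs) # sch_insert z rs)"
    by (cases ys) (simp_all add: r_def list_update_append nth_append)
  finally show ?thesis unfolding r_def .
qed

lemma sch_insert_single_row_iff:
  assumes sorted: "sorted_wrt (<) r" and new: "a \<notin> set r"
  shows "length (sch_insert a [r]) = 1 \<longleftrightarrow>
    card {x \<in> set r. a < x} = 0 \<or> card {x \<in> set r. a < x} = 1 \<and> odd (length r)"
proof -
  obtain xs zs where r: "r = xs @ zs" and below: "\<forall>x\<in>set xs. x < a"
    and above: "\<forall>z\<in>set zs. a < z"
    using sorted_row_split[OF sorted new] by blast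
  have "{x \<in> set r. a < x} = set zs" using below above by (auto simp: r)
  moreover have "distinct zs" using sorted by (simp add: r strict_sorted_iff)
  ultimately have card: "card {x \<in> set r. a < x} = length zs" by (simp add: distinct_card)
  show ?thesis
  proof (cases zs)
    case Nil
    with below show ?thesis unfolding card by (simp add: r)
  next
    case (Cons y ys)
    with sorted below above show ?thesis
      using sch_insert_into_sorted_row[of xs y ys a "[]"] unfolding card
      by (cases ys) (auto simp: r)
  qed
qed

lemma sch_insert_single_row_sorted:
  assumes sorted: "sorted_wrt (<) r" and new: "a \<notin> set r"
    and single: "sch_insert a [r] = [r']"
  shows "sorted_wrt (<) r' \<and> set r' = insert a (set r)"
proof -
  obtain xs zs where r: "r = xs @ zs" and below: "\<forall>x\<in>set xs. x < a"
    and above: "\<forall>z\<in>set zs. a < z"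
    using sorted_row_split[OF sorted new] by blast
  show ?thesis
  proof (cases zs)
    case Nil
    with sorted below single show ?thesis by (auto simp: r sorted_wrt_append)
  next
    case (Cons y ys)
    with sorted below above single show ?thesis
      using sch_insert_into_sorted_row[of xs y ys a "[]"]
      by (cases ys) (auto simp: r sorted_wrt_append split: if_splits)
  qed
qed

lemma sch_P_single_row_sorted:
  assumes "distinct xs" "xs \<noteq> []" "sch_P xs = [r]"
  shows "sorted_wrt (<) r \<and> set r = set xs"
  using assms
proof (induction xs arbitrary: r rule: rev_induct)
  case (snoc a xs)
  show ?case
  proof (cases "xs = []")
    case True
    with snoc.prems show ?thesis by (auto simp: sch_P_def)
  next
    case False
    then obtain r0 where r0: "sch_P xs = [r0]"
      using sch_P_single_row_prefix[of xs a] snoc.prems by (auto simp: length_Suc_conv)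
    with snoc False have "sorted_wrt (<) r0" "set r0 = set xs" by auto
    moreover have "sch_insert a [r0] = [r]" using snoc.prems r0 False by (simp add: sch_P_snoc)
    ultimately show ?thesis
      using sch_insert_single_row_sorted[of r0 a r] snoc.prems by auto
  qed
qed simp

lemma sch_P_snoc_single_row_iff:
  assumes distinct: "distinct (xs @ [a])" and "xs \<noteq> []"
  shows "length (sch_P (xs @ [a])) = 1 \<longleftrightarrow> length (sch_P xs) = 1 \<and>
    (card {x \<in> set xs. a < x} = 0 \<or> card {x \<in> set xs. a < x} = 1 \<and> odd (length xs))"
proof (cases "length (sch_P xs) = 1")
  case True
  then obtain r where r: "sch_P xs = [r]" by (auto simp: length_Suc_conv)
  with assms have "sorted_wrt (<) r" "set r = set xs" using sch_P_single_row_sorted by auto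
  moreover from this have "length r = length xs"
    using distinct by (metis distinct_append distinct_card strict_sorted_iff)
  ultimately show ?thesis
    using sch_insert_single_row_iff[of r a] distinct \<open>xs \<noteq> []\<close> r by (simp add: sch_P_snoc)
qed (use assms sch_P_single_row_prefix in blast)

lemma Max_Diff_Max_in:
  fixes S :: "'a::linorder set"
  assumes "finite S" "2 \<le> card S"
  shows "Max (S - {Max S}) \<in> S - {Max S}"
proof -
  have "Max S \<in> S" using assms by (intro Max_in) auto
  then have "card (S - {Max S}) \<noteq> 0" using assms by simp
  then show ?thesis using assms(1) by (intro Max_in) auto
qed

lemma card_greater_eq_0_iff:
  fixes S :: "'a::linorder set"
  assumes "finite S" "a \<in> S"
  shows "card {x \<in> S. a < x} = 0 \<longleftrightarrow> a = Max S"
  using assms by (auto simp: not_less intro!: Max_eqI[symmetric])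

lemma card_greater_eq_1_iff:
  fixes S :: "'a::linorder set"
  assumes fin: "finite S" and "a \<in> S" and two: "2 \<le> card S"
  shows "card {x \<in> S. a < x} = 1 \<longleftrightarrow> a = Max (S - {Max S})"
proof -
  define M where "M = Max S"
  have "S \<noteq> {}" using two by auto
  then have "M \<in> S" and le_M: "\<forall>x\<in>S. x \<le> M" using fin by (simp_all add: M_def)
  have "card {x \<in> S. a < x} = 1 \<longleftrightarrow> {x \<in> S. a < x} = {M}"
  proof
    assume "card {x \<in> S. a < x} = 1"
    then obtain b where b: "{x \<in> S. a < x} = {b}" by (rule card_1_singletonE)
    then have "a < b" "b \<in> S" by auto
    then have "a < M" using le_M by (meson order.strict_trans2)
    then have "M \<in> {x \<in> S. a < x}" using \<open>M \<in> S\<close> by simp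
    with b show "{x \<in> S. a < x} = {M}" by simp
  qed simp
  also have "\<dots> \<longleftrightarrow> a = Max (S - {M})"
  proof
    assume above_a: "{x \<in> S. a < x} = {M}"
    then have "a \<noteq> M" by auto
    show "a = Max (S - {M})"
    proof (rule Max_eqI[symmetric])
      show "finite (S - {M})" using fin by simp
      show "a \<in> S - {M}" using \<open>a \<in> S\<close> \<open>a \<noteq> M\<close> by simp
      fix y assume y: "y \<in> S - {M}"
      then have "y \<notin> {x \<in> S. a < x}" using above_a by simp
      with y show "y \<le> a" by simp
    qed
  next
    assume "a = Max (S - {M})"
    then have "a \<in> S - {M}" and below_a: "\<forall>y\<in>S - {M}. y \<le> a"
      using Max_Diff_Max_in[OF fin two] fin by (simp_all add: M_def)
    show "{x \<in> S. a < x} = {M}"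
    proof (intro equalityI subsetI)
      fix x assume "x \<in> {x \<in> S. a < x}"
      with below_a show "x \<in> {M}" by (metis DiffI leD mem_Collect_eq singletonD singletonI)
    next
      fix x assume "x \<in> {M}"
      moreover have "a < M" using \<open>a \<in> S - {M}\<close> le_M by (simp add: order.strict_iff_order)
      ultimately show "x \<in> {x \<in> S. a < x}" using \<open>M \<in> S\<close> by simp
    qed
  qed
  finally show ?thesis unfolding M_def .
qed

definition single_row_perms :: "nat set \<Rightarrow> nat list set" where
  "single_row_perms S = {pi. distinct pi \<and> set pi = S \<and> length (sch_P pi) = 1}"

definition single_row_last_letters :: "'a::linorder set \<Rightarrow> 'a set" where
  "single_row_last_letters S =
    insert (Max S) (if even (card S) then {Max (S - {Max S})} else {})"

lemma single_row_last_letters_subset: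
  assumes "finite S" "2 \<le> card S"
  shows "single_row_last_letters S \<subseteq> S"
proof -
  have "S \<noteq> {}" using assms(2) by auto
  then show ?thesis
    using Max_Diff_Max_in[OF assms] assms(1) by (auto simp: single_row_last_letters_def)
qed

lemma card_single_row_last_letters:
  "finite S \<Longrightarrow> 2 \<le> card S \<Longrightarrow>
    card (single_row_last_letters S) = (if even (card S) then 2 else 1)"
  using Max_Diff_Max_in[of S] by (auto simp: single_row_last_letters_def)

lemma finite_single_row_perms: "finite S \<Longrightarrow> finite (single_row_perms S)"
  by (rule finite_subset[OF _ finite_subset_distinct]) (auto simp: single_row_perms_def)

lemma snoc_in_single_row_perms_iff:
  assumes fin: "finite S" and two: "2 \<le> card S"
  shows "xs @ [a] \<in> single_row_perms S \<longleftrightarrow>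
    a \<in> single_row_last_letters S \<and> xs \<in> single_row_perms (S - {a})"
proof (cases "a \<in> S \<and> distinct xs \<and> set xs = S - {a}")
  case True
  then have distinct: "distinct (xs @ [a])" and "length xs = card S - 1"
    using fin by (auto simp: distinct_card[symmetric])
  then have "xs \<noteq> []" "odd (length xs) \<longleftrightarrow> even (card S)" using two by auto
  moreover have "{x \<in> set xs. a < x} = {x \<in> S. a < x}" using True by auto
  ultimately show ?thesis
    using True sch_P_snoc_single_row_iff[OF distinct] card_greater_eq_0_iff[OF fin]
      card_greater_eq_1_iff[OF fin _ two]
    by (auto simp: single_row_perms_def single_row_last_letters_def)
next
  case False
  then show ?thesis
    using single_row_last_letters_subset[OF fin two] by (auto simp: single_row_perms_def)
qed

lemma single_row_perms_eq_UN:
  assumes fin: "finite S" and two: "2 \<le> card S"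
  shows "single_row_perms S =
    (\<Union>a \<in> single_row_last_letters S. (\<lambda>xs. xs @ [a]) ` single_row_perms (S - {a}))"
proof (intro equalityI subsetI)
  fix pi assume pi: "pi \<in> single_row_perms S"
  then have "pi \<noteq> []" using two by (auto simp: single_row_perms_def)
  then obtain xs a where "pi = xs @ [a]" by (metis rev_exhaust)
  with pi show "pi \<in> (\<Union>a \<in> single_row_last_letters S. (\<lambda>xs. xs @ [a]) ` single_row_perms (S - {a}))"
    using snoc_in_single_row_perms_iff[OF fin two] by blast
qed (use snoc_in_single_row_perms_iff[OF fin two] in blast)

lemma single_row_perms_singleton: "single_row_perms {s} = {[s]}"
proof (intro equalityI subsetI)
  fix pi assume "pi \<in> single_row_perms {s}"
  then have "distinct pi" "set pi = {s}" by (auto simp: single_row_perms_def)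
  then have "length pi = 1" using distinct_card[of pi] by simp
  then obtain x where "pi = [x]" by (auto simp: length_Suc_conv)
  with \<open>set pi = {s}\<close> show "pi \<in> {[s]}" by simp
qed (simp add: single_row_perms_def sch_P_def)

lemma card_single_row_perms:
  assumes "finite S" "S \<noteq> {}"
  shows "card (single_row_perms S) = 2 ^ (card S div 2)"
  using assms
proof (induction "card S" arbitrary: S rule: less_induct)
  case less
  show ?case
  proof (cases "card S = 1")
    case True
    then obtain s where "S = {s}" by (rule card_1_singletonE)
    then show ?thesis by (simp add: single_row_perms_singleton)
  next
    case False
    moreover have "card S \<noteq> 0" using less.prems by simp
    ultimately have two: "2 \<le> card S" by linarith
    let ?L = "single_row_last_letters S"
    have IH: "card (single_row_perms (S - {a})) = 2 ^ ((card S - 1) div 2)" if "a \<in> ?L" for a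
    proof -
      from that have "a \<in> S" using single_row_last_letters_subset[OF less.prems(1) two] by auto
      then have card_a: "card (S - {a}) = card S - 1" using less.prems by simp
      then have "S - {a} \<noteq> {}" using two by (intro notI) simp
      with card_a two less.prems show ?thesis using less.hyps[of "S - {a}"] by simp
    qed
    have "card (single_row_perms S) =
        (\<Sum>a\<in>?L. card ((\<lambda>xs. xs @ [a]) ` single_row_perms (S - {a})))"
      unfolding single_row_perms_eq_UN[OF less.prems(1) two]
      by (rule card_UN_disjoint) (auto simp: single_row_last_letters_def finite_single_row_perms less.prems)
    also have "\<dots> = card ?L * 2 ^ ((card S - 1) div 2)"
      using IH by (simp add: card_image inj_on_def)
    also have "\<dots> = 2 ^ (card S div 2)"
    proof (cases "even (card S)")
      case True
      then have "card S div 2 = Suc ((card S - 1) div 2)" using two by presburger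
      with True show ?thesis by (simp add: card_single_row_last_letters[OF less.prems(1) two])
    next
      case False
      then have "card S div 2 = (card S - 1) div 2" by presburger
      with False show ?thesis by (simp add: card_single_row_last_letters[OF less.prems(1) two])
    qed
    finally show ?thesis .
  qed
qed

theorem mainTheorem8:
  fixes n :: nat
  assumes "n \<ge> 1"
  shows "card {pi. distinct pi \<and> set pi = {1..n} \<and> length (sch_P pi) = 1} = 2 ^ (n div 2)"
  using card_single_row_perms[of "{1..n}"] assms by (simp add: single_row_perms_def)

end
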